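(* Let $(\mathfrak{g},[\cdot,\ldots,\cdot],\varepsilon)$ be an $n$-Lie color algebra, $(M,\rho)$ a representation of it, $\alpha:\mathfrak{g}\to\mathfrak{g}$ an algebra morphism (of degree zero, with $\alpha([x_1,\ldots,x_n])=[\alpha(x_1),\ldots,\alpha(x_n)]$) and $\mu:M\to M$ a linear map of degree zero such that $\rho(\tilde\alpha(X))\circ\mu=\mu\circ\rho(X)$ for all $X\in\bigwedge^{n-1}\mathfrak{g}$. Then $(M,\mu\circ\rho,\mu)$ is a representation of the multiplicative $n$-Hom-Lie color algebra $(\mathfrak{g},[\cdot,\ldots,\cdot]_\alpha,\varepsilon,\alpha)$, where $[\cdot,\ldots,\cdot]_\alpha=\alpha\circ[\cdot,\ldots,\cdot]$.
   Context: $\mathbb{K}$ is a field of characteristic zero and $\Gamma$ an abelian group. A bicharacter is a map $\varepsilon:\Gamma\times\Gamma\to\mathbb{K}\setminus\{0\}$ with $\varepsilon(a,b)\varepsilon(b,a)=1$, $\varepsilon(a,b+c)=\varepsilon(a,b)\varepsilon(a,c)$, $\varepsilon(a+b,c)=\varepsilon(a,c)\varepsilon(b,c)$. For homogeneous $x,y$, $\varepsilon(x,y)=\varepsilon(|x|,|y|)$ and $\varepsilon(x,y_1+\dots+y_k)=\varepsilon(|x|,|y_1|+\dots+|y_k|)$ ($=1$ for an empty sum); for $X=(x_1,\ldots,x_{n-1})$, $\varepsilon(X,\cdot)$ uses the total degree. An $n$-Hom-Lie color algebra $(\mathfrak{g},[\cdot,\ldots,\cdot],\varepsilon,\alpha)$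 is a $\Gamma$-graded vector space with an $n$-linear bracket of degree zero, a bicharacter $\varepsilon$ and a degree-zero linear map $\alpha$ such that for homogeneous elements: (i) $[x_1,\ldots,x_i,x_{i+1},\ldots,x_n]=-\varepsilon(x_i,x_{i+1})[x_1,\ldots,x_{i+1},x_i,\ldots,x_n]$; (ii) $[\alpha(x_1),\ldots,\alpha(x_{n-1}),[y_1,\ldots,y_n]]=\sum_{i=1}^n\varepsilon(x_1+\dots+x_{n-1},y_1+\dots+y_{i-1})[\alpha(y_1),\ldots,\alpha(y_{i-1}),[x_1,\ldots,x_{n-1},y_i],\alpha(y_{i+1}),\ldots,\alpha(y_n)]$; it is multiplicative if $\alpha$ commutes with the bracket; an $n$-Lie color algebra is the case $\alpha=\mathrm{id}$. $\bigwedge^{n-1}\mathfrak{g}$ is the $\varepsilon$-exterior power; $\tilde\alpha(x_1\wedge\dots\wedge x_{n-1})=\alpha(x_1)\wedge\dots\wedge\alpha(x_{n-1})$, $\mathrm{ad}_X(y)=[x_1,\ldots,x_{n-1},y]$. A representation $(M,\rho,\mu)$ of an $n$-Hom-Lie color algebra is a $\Gamma$-graded space $M$, an $\varepsilon$-skew-symmetric degree-zero linear map $\rho:\bigwedge^{n-1}\mathfrak{g}\to\mathrm{End}(M)$ and a degree-zero linear $\mu:M\to M$ such that for homogeneous $X=(x_1,\ldots,x_{n-1})$, $Y=(y_1,\ldots,y_{n-1})$, $x_n$, and $y_1,\ldots,y_{n-2}$: (a) $\rho(\tilde\alpha(X))\circ\mu=\mu\circ\rho(X)$; (b) $\rho(\tilde\alpha(X))\rho(Y)-\varepsilon(X,Y)\rho(\tilde\alpha(Y))\rho(X)=\sum_{i=1}^{n-1}\varepsilon(X,y_1+\dots+y_{i-1})\rho(\alpha(y_1),\ldots,\alpha(y_{i-1}),\mathrm{ad}_X(y_i),\alpha(y_{i+1}),\ldots,\alpha(y_{n-1}))\circ\mu$;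 (c) $\rho([x_1,\ldots,x_n],\alpha(y_1),\ldots,\alpha(y_{n-2}))\circ\mu=\sum_{i=1}^n(-1)^{n-i}\varepsilon(x_i,x_{i+1}+\dots+x_n)\rho(\alpha(x_1),\ldots,\widehat{x_i},\ldots,\alpha(x_n))\circ\rho(x_i,y_1,\ldots,y_{n-2})$. A representation $(M,\rho)$ of an $n$-Lie color algebra is the case $\alpha=\mathrm{id}_{\mathfrak{g}}$, $\mu=\mathrm{id}_M$. *)

theory Defs
  imports Main "HOL.Vector_Spaces"
begin

(* Conventions.
   - 'k : the ground field (characteristic zero),  'g : the abelian grading group Gamma.
   - A Gamma-graded vector space is a K-vector space (type 'v, scalar multiplication s)
     together with a family G :: 'g => 'v set of subspaces (G a = homogeneous part of degree a)
     such that every vector is uniquely a finite sum of homogeneous components.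
   - n-ary brackets and the maps rho are functions on lists (of length n, resp. n-1);
     a linear map on the epsilon-exterior power Lambda^(n-1) g is represented by the
     corresponding epsilon-skew-symmetric multilinear map on (n-1)-tuples.
   - "x homogeneous of degree d": x : G d. *)

definition bicharacter :: "('g::ab_group_add \<Rightarrow> 'g \<Rightarrow> 'k::field) \<Rightarrow> bool" where
  "bicharacter eps \<longleftrightarrow>
     (\<forall>a b. eps a b \<noteq> 0) \<and>
     (\<forall>a b. eps a b * eps b a = 1) \<and>
     (\<forall>a b c. eps a (b + c) = eps a b * eps a c) \<and>
     (\<forall>a b c. eps (a + b) c = eps a c * eps b c)"

definition graded_vs :: "('k::field \<Rightarrow> 'v::ab_group_add \<Rightarrow> 'v) \<Rightarrow> ('g::ab_group_add \<Rightarrow> 'v set) \<Rightarrow> bool" where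
  "graded_vs s G \<longleftrightarrow>
     vector_space s \<and>
     (\<forall>a. module.subspace s (G a)) \<and>
     (\<forall>v. \<exists>!c. finite {a. c a \<noteq> 0} \<and> (\<forall>a. c a \<in> G a) \<and> v = (\<Sum>a\<in>{a. c a \<noteq> 0}. c a))"

definition homog :: "('g \<Rightarrow> 'v set) \<Rightarrow> 'v list \<Rightarrow> 'g list \<Rightarrow> bool" where
  "homog G xs ds \<longleftrightarrow> list_all2 (\<lambda>x d. x \<in> G d) xs ds"

definition deg0 :: "('g \<Rightarrow> 'v set) \<Rightarrow> ('g \<Rightarrow> 'w set) \<Rightarrow> ('v \<Rightarrow> 'w) \<Rightarrow> bool" where
  "deg0 G H f \<longleftrightarrow> (\<forall>a x. x \<in> G a \<longrightarrow> f x \<in> H a)"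

definition multilinear :: "('k::field \<Rightarrow> 'v::ab_group_add \<Rightarrow> 'v) \<Rightarrow> ('k \<Rightarrow> 'w::ab_group_add \<Rightarrow> 'w)
    \<Rightarrow> nat \<Rightarrow> ('v list \<Rightarrow> 'w) \<Rightarrow> bool" where
  "multilinear s t k F \<longleftrightarrow>
     (\<forall>xs i. length xs = k \<and> i < k \<longrightarrow> Vector_Spaces.linear s t (\<lambda>y. F (xs[i := y])))"

definition swap_adj :: "'a list \<Rightarrow> nat \<Rightarrow> 'a list" where
  "swap_adj xs i = xs[i := xs ! Suc i, Suc i := xs ! i]"

definition del_nth :: "nat \<Rightarrow> 'a list \<Rightarrow> 'a list" where
  "del_nth i xs = take i xs @ drop (Suc i) xs"

definition n_hom_lie_color_alg ::
  "nat \<Rightarrow> ('k::field \<Rightarrow> 'v::ab_group_add \<Rightarrow> 'v) \<Rightarrow> ('g::ab_group_add \<Rightarrow> 'v set)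
   \<Rightarrow> ('v list \<Rightarrow> 'v) \<Rightarrow> ('g \<Rightarrow> 'g \<Rightarrow> 'k) \<Rightarrow> ('v \<Rightarrow> 'v) \<Rightarrow> bool" where
  "n_hom_lie_color_alg n s G br eps \<alpha> \<longleftrightarrow>
     2 \<le> n \<and> graded_vs s G \<and> bicharacter eps \<and>
     multilinear s s n br \<and>
     (\<forall>xs ds. length xs = n \<and> homog G xs ds \<longrightarrow> br xs \<in> G (sum_list ds)) \<and>
     Vector_Spaces.linear s s \<alpha> \<and> deg0 G G \<alpha> \<and>
     (\<forall>xs ds i. length xs = n \<and> homog G xs ds \<and> Suc i < n \<longrightarrow>
        br xs = s (- eps (ds ! i) (ds ! Suc i)) (br (swap_adj xs i))) \<and>
     (\<forall>xs ds ys es. length xs = n - 1 \<and> homog G xs ds \<and> length ys = n \<and> homog G ys es \<longrightarrow>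
        br (map \<alpha> xs @ [br ys]) =
        (\<Sum>i<n. s (eps (sum_list ds) (sum_list (take i es)))
                   (br (map \<alpha> (take i ys) @ [br (xs @ [ys ! i])] @ map \<alpha> (drop (Suc i) ys)))))"

definition multiplicative :: "nat \<Rightarrow> ('v list \<Rightarrow> 'v) \<Rightarrow> ('v \<Rightarrow> 'v) \<Rightarrow> bool" where
  "multiplicative n br \<alpha> \<longleftrightarrow> (\<forall>xs. length xs = n \<longrightarrow> \<alpha> (br xs) = br (map \<alpha> xs))"

definition n_lie_color_alg ::
  "nat \<Rightarrow> ('k::field \<Rightarrow> 'v::ab_group_add \<Rightarrow> 'v) \<Rightarrow> ('g::ab_group_add \<Rightarrow> 'v set)
   \<Rightarrow> ('v list \<Rightarrow> 'v) \<Rightarrow> ('g \<Rightarrow> 'g \<Rightarrow> 'k) \<Rightarrow> bool" where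
  "n_lie_color_alg n s G br eps \<longleftrightarrow> n_hom_lie_color_alg n s G br eps id"

definition hom_rep ::
  "nat \<Rightarrow> ('k::field \<Rightarrow> 'v::ab_group_add \<Rightarrow> 'v) \<Rightarrow> ('g::ab_group_add \<Rightarrow> 'v set)
   \<Rightarrow> ('v list \<Rightarrow> 'v) \<Rightarrow> ('g \<Rightarrow> 'g \<Rightarrow> 'k) \<Rightarrow> ('v \<Rightarrow> 'v)
   \<Rightarrow> ('k \<Rightarrow> 'm::ab_group_add \<Rightarrow> 'm) \<Rightarrow> ('g \<Rightarrow> 'm set)
   \<Rightarrow> ('v list \<Rightarrow> 'm \<Rightarrow> 'm) \<Rightarrow> ('m \<Rightarrow> 'm) \<Rightarrow> bool" where
  "hom_rep n s G br eps \<alpha> t MG \<rho> \<mu> \<longleftrightarrow>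
     graded_vs t MG \<and>
     (\<forall>xs. length xs = n - 1 \<longrightarrow> Vector_Spaces.linear t t (\<rho> xs)) \<and>
     (\<forall>m. multilinear s t (n - 1) (\<lambda>xs. \<rho> xs m)) \<and>
     (\<forall>xs ds a m. length xs = n - 1 \<and> homog G xs ds \<and> m \<in> MG a \<longrightarrow>
        \<rho> xs m \<in> MG (sum_list ds + a)) \<and>
     (\<forall>xs ds i m. length xs = n - 1 \<and> homog G xs ds \<and> Suc i < n - 1 \<longrightarrow>
        \<rho> xs m = t (- eps (ds ! i) (ds ! Suc i)) (\<rho> (swap_adj xs i) m)) \<and>
     Vector_Spaces.linear t t \<mu> \<and> deg0 MG MG \<mu> \<and>
     (\<forall>xs ds m. length xs = n - 1 \<and> homog G xs ds \<longrightarrow>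
        \<rho> (map \<alpha> xs) (\<mu> m) = \<mu> (\<rho> xs m)) \<and>
     (\<forall>xs ds ys es m. length xs = n - 1 \<and> homog G xs ds \<and> length ys = n - 1 \<and> homog G ys es \<longrightarrow>
        \<rho> (map \<alpha> xs) (\<rho> ys m) - t (eps (sum_list ds) (sum_list es)) (\<rho> (map \<alpha> ys) (\<rho> xs m)) =
        (\<Sum>i<n - 1. t (eps (sum_list ds) (sum_list (take i es)))
            (\<rho> (map \<alpha> (take i ys) @ [br (xs @ [ys ! i])] @ map \<alpha> (drop (Suc i) ys)) (\<mu> m)))) \<and>
     (\<forall>xs ds ys es m. length xs = n \<and> homog G xs ds \<and> length ys = n - 2 \<and> homog G ys es \<longrightarrow>
        \<rho> (br xs # map \<alpha> ys) (\<mu> m) =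
        (\<Sum>i<n. t ((- 1) ^ (n - Suc i) * eps (ds ! i) (sum_list (drop (Suc i) ds)))
            (\<rho> (map \<alpha> (del_nth i xs)) (\<rho> (xs ! i # ys) m))))"

definition n_lie_rep ::
  "nat \<Rightarrow> ('k::field \<Rightarrow> 'v::ab_group_add \<Rightarrow> 'v) \<Rightarrow> ('g::ab_group_add \<Rightarrow> 'v set)
   \<Rightarrow> ('v list \<Rightarrow> 'v) \<Rightarrow> ('g \<Rightarrow> 'g \<Rightarrow> 'k)
   \<Rightarrow> ('k \<Rightarrow> 'm::ab_group_add \<Rightarrow> 'm) \<Rightarrow> ('g \<Rightarrow> 'm set) \<Rightarrow> ('v list \<Rightarrow> 'm \<Rightarrow> 'm) \<Rightarrow> bool" where
  "n_lie_rep n s G br eps t MG \<rho> \<longleftrightarrow> hom_rep n s G br eps id t MG \<rho> id"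

end

theory Submission
  imports Defs
begin

(* Apply alpha (resp. mu) to the fundamental identity of the n-Lie color algebra and to the
   identities of its representation.  Multiplicativity of alpha and the compatibility
   rho(alpha X) o mu = mu o rho(X) push one copy of alpha (resp. mu) into every term, and this
   produces exactly the twisted identities required of the Hom-structure. *)

lemma multilinear_compose_linear:
  assumes "multilinear s t k F" and "Vector_Spaces.linear t u f"
  shows "multilinear s u k (\<lambda>xs. f (F xs))"
  using assms Vector_Spaces.linear_compose[of s t _ u f]
  unfolding multilinear_def by (simp add: o_def)

lemma n_lie_color_alg_fundamental_identity:
  assumes "n_lie_color_alg n s G br eps"
    and "length xs = n - 1" "homog G xs ds" "length ys = n" "homog G ys es"
  shows "br (xs @ [br ys]) =
    (\<Sum>i<n. s (eps (sum_list ds) (sum_list (take i es)))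
               (br (take i ys @ [br (xs @ [ys ! i])] @ drop (Suc i) ys)))"
  using assms unfolding n_lie_color_alg_def n_hom_lie_color_alg_def list.map_id by blast

lemma n_lie_rep_commutator:
  assumes "n_lie_rep n s G br eps t MG \<rho>"
    and "length xs = n - 1" "homog G xs ds" "length ys = n - 1" "homog G ys es"
  shows "\<rho> xs (\<rho> ys m) - t (eps (sum_list ds) (sum_list es)) (\<rho> ys (\<rho> xs m)) =
    (\<Sum>i<n - 1. t (eps (sum_list ds) (sum_list (take i es)))
                   (\<rho> (take i ys @ [br (xs @ [ys ! i])] @ drop (Suc i) ys) m))"
  using assms unfolding n_lie_rep_def hom_rep_def list.map_id id_apply by blast

lemma n_lie_rep_bracket:
  assumes "n_lie_rep n s G br eps t MG \<rho>"
    and "length xs = n" "homog G xs ds" "length ys = n - 2" "homog G ys es"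
  shows "\<rho> (br xs # ys) m =
    (\<Sum>i<n. t ((- 1) ^ (n - Suc i) * eps (ds ! i) (sum_list (drop (Suc i) ds)))
               (\<rho> (del_nth i xs) (\<rho> (xs ! i # ys) m)))"
  using assms unfolding n_lie_rep_def hom_rep_def list.map_id id_apply by blast

lemma n_hom_lie_color_alg_twist_fundamental_identity:
  assumes alg: "n_lie_color_alg n s G br eps"
    and lin: "Vector_Spaces.linear s s \<alpha>" and mult: "multiplicative n br \<alpha>"
    and xs: "length xs = n - 1" "homog G xs ds" and ys: "length ys = n" "homog G ys es"
  shows "\<alpha> (br (map \<alpha> xs @ [\<alpha> (br ys)])) =
    (\<Sum>i<n. s (eps (sum_list ds) (sum_list (take i es)))
      (\<alpha> (br (map \<alpha> (take i ys) @ [\<alpha> (br (xs @ [ys ! i]))] @ map \<alpha> (drop (Suc i) ys)))))"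
proof -
  interpret \<alpha>: module_hom s s \<alpha>
    using lin by (simp add: module_hom_iff_linear)
  have n2: "2 \<le> n"
    using alg by (simp add: n_lie_color_alg_def n_hom_lie_color_alg_def)
  have \<alpha>\<alpha>_br: "\<alpha> (\<alpha> (br zs)) = \<alpha> (br (map \<alpha> zs))" if "length zs = n" for zs
    using mult that by (simp add: multiplicative_def)
  have "\<alpha> (br (map \<alpha> xs @ [\<alpha> (br ys)])) = \<alpha> (\<alpha> (br (xs @ [br ys])))"
    using \<alpha>\<alpha>_br[of "xs @ [br ys]"] mult xs ys n2 by (simp add: multiplicative_def)
  also have "\<dots> = (\<Sum>i<n. s (eps (sum_list ds) (sum_list (take i es)))
      (\<alpha> (\<alpha> (br (take i ys @ [br (xs @ [ys ! i])] @ drop (Suc i) ys)))))"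
    by (simp add: n_lie_color_alg_fundamental_identity[OF alg xs ys] \<alpha>.sum \<alpha>.scale)
  also have "\<dots> = (\<Sum>i<n. s (eps (sum_list ds) (sum_list (take i es)))
      (\<alpha> (br (map \<alpha> (take i ys) @ [\<alpha> (br (xs @ [ys ! i]))] @ map \<alpha> (drop (Suc i) ys)))))"
    using ys by (intro sum.cong refl) (simp add: \<alpha>\<alpha>_br)
  finally show ?thesis .
qed

lemma multiplicative_twist:
  "multiplicative n br \<alpha> \<Longrightarrow> multiplicative n (\<lambda>xs. \<alpha> (br xs)) \<alpha>"
  by (simp add: multiplicative_def)

lemma n_hom_lie_color_alg_twist:
  assumes alg: "n_lie_color_alg n s G br eps"
    and lin: "Vector_Spaces.linear s s \<alpha>" and deg: "deg0 G G \<alpha>"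
    and mult: "multiplicative n br \<alpha>"
  shows "n_hom_lie_color_alg n s G (\<lambda>xs. \<alpha> (br xs)) eps \<alpha>"
proof -
  interpret \<alpha>: module_hom s s \<alpha>
    using lin by (simp add: module_hom_iff_linear)
  have n2: "2 \<le> n" and gv: "graded_vs s G" and bic: "bicharacter eps"
    and br_multilinear: "multilinear s s n br"
    and br_deg: "\<forall>xs ds. length xs = n \<and> homog G xs ds \<longrightarrow> br xs \<in> G (sum_list ds)"
    and br_skew: "\<forall>xs ds i. length xs = n \<and> homog G xs ds \<and> Suc i < n \<longrightarrow>
        br xs = s (- eps (ds ! i) (ds ! Suc i)) (br (swap_adj xs i))"
    using alg unfolding n_lie_color_alg_def n_hom_lie_color_alg_def by blast+
  have \<alpha>br_deg: "\<alpha> (br xs) \<in> G (sum_list ds)" if "length xs = n" "homog G xs ds" for xs ds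
    using br_deg deg that unfolding deg0_def by blast
  have \<alpha>br_skew: "\<alpha> (br xs) = s (- eps (ds ! i) (ds ! Suc i)) (\<alpha> (br (swap_adj xs i)))"
    if "length xs = n" "homog G xs ds" "Suc i < n" for xs ds i
    using br_skew that \<alpha>.scale by metis
  show ?thesis
    using n2 gv bic lin deg \<alpha>br_deg \<alpha>br_skew multilinear_compose_linear[OF br_multilinear lin]
      n_hom_lie_color_alg_twist_fundamental_identity[OF alg lin mult]
    unfolding n_hom_lie_color_alg_def by blast
qed

lemma hom_rep_twist_commutator:
  assumes rep: "n_lie_rep n s G br eps t MG \<rho>" and lin: "Vector_Spaces.linear t t \<mu>"
    and compat: "\<forall>xs m. length xs = n - 1 \<longrightarrow> \<rho> (map \<alpha> xs) (\<mu> m) = \<mu> (\<rho> xs m)"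
    and xs: "length xs = n - 1" "homog G xs ds" and ys: "length ys = n - 1" "homog G ys es"
  shows "(\<mu> \<circ> \<rho> (map \<alpha> xs)) ((\<mu> \<circ> \<rho> ys) m)
       - t (eps (sum_list ds) (sum_list es)) ((\<mu> \<circ> \<rho> (map \<alpha> ys)) ((\<mu> \<circ> \<rho> xs) m)) =
     (\<Sum>i<n - 1. t (eps (sum_list ds) (sum_list (take i es)))
        ((\<mu> \<circ> \<rho> (map \<alpha> (take i ys) @ [\<alpha> (br (xs @ [ys ! i]))] @ map \<alpha> (drop (Suc i) ys))) (\<mu> m)))"
proof -
  interpret \<mu>: module_hom t t \<mu>
    using lin by (simp add: module_hom_iff_linear)
  have \<mu>\<mu>_\<rho>: "\<mu> (\<mu> (\<rho> zs m)) = \<mu> (\<rho> (map \<alpha> zs) (\<mu> m))" if "length zs = n - 1" for zs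
    using compat that by simp
  have "(\<mu> \<circ> \<rho> (map \<alpha> xs)) ((\<mu> \<circ> \<rho> ys) m)
      - t (eps (sum_list ds) (sum_list es)) ((\<mu> \<circ> \<rho> (map \<alpha> ys)) ((\<mu> \<circ> \<rho> xs) m))
    = \<mu> (\<mu> (\<rho> xs (\<rho> ys m) - t (eps (sum_list ds) (sum_list es)) (\<rho> ys (\<rho> xs m))))"
    using xs ys compat by (simp add: \<mu>.diff \<mu>.scale)
  also have "\<dots> = (\<Sum>i<n - 1. t (eps (sum_list ds) (sum_list (take i es)))
      (\<mu> (\<mu> (\<rho> (take i ys @ [br (xs @ [ys ! i])] @ drop (Suc i) ys) m))))"
    by (simp add: n_lie_rep_commutator[OF rep xs ys] \<mu>.sum \<mu>.scale)
  also have "\<dots> = (\<Sum>i<n - 1. t (eps (sum_list ds) (sum_list (take i es)))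
      ((\<mu> \<circ> \<rho> (map \<alpha> (take i ys) @ [\<alpha> (br (xs @ [ys ! i]))] @ map \<alpha> (drop (Suc i) ys))) (\<mu> m)))"
    using ys by (intro sum.cong refl) (simp add: \<mu>\<mu>_\<rho>)
  finally show ?thesis .
qed

lemma hom_rep_twist_bracket:
  assumes rep: "n_lie_rep n s G br eps t MG \<rho>" and n2: "2 \<le> n"
    and lin: "Vector_Spaces.linear t t \<mu>"
    and compat: "\<forall>xs m. length xs = n - 1 \<longrightarrow> \<rho> (map \<alpha> xs) (\<mu> m) = \<mu> (\<rho> xs m)"
    and xs: "length xs = n" "homog G xs ds" and ys: "length ys = n - 2" "homog G ys es"
  shows "(\<mu> \<circ> \<rho> (\<alpha> (br xs) # map \<alpha> ys)) (\<mu> m) =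
     (\<Sum>i<n. t ((- 1) ^ (n - Suc i) * eps (ds ! i) (sum_list (drop (Suc i) ds)))
        ((\<mu> \<circ> \<rho> (map \<alpha> (del_nth i xs))) ((\<mu> \<circ> \<rho> (xs ! i # ys)) m)))"
proof -
  interpret \<mu>: module_hom t t \<mu>
    using lin by (simp add: module_hom_iff_linear)
  have \<mu>\<mu>_\<rho>: "\<mu> (\<mu> (\<rho> zs m')) = \<mu> (\<rho> (map \<alpha> zs) (\<mu> m'))" if "length zs = n - 1" for zs m'
    using compat that by simp
  have "(\<mu> \<circ> \<rho> (\<alpha> (br xs) # map \<alpha> ys)) (\<mu> m) = \<mu> (\<mu> (\<rho> (br xs # ys) m))"
    using \<mu>\<mu>_\<rho>[of "br xs # ys"] ys n2 by simp
  also have "\<dots> = (\<Sum>i<n. t ((- 1) ^ (n - Suc i) * eps (ds ! i) (sum_list (drop (Suc i) ds)))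
      (\<mu> (\<mu> (\<rho> (del_nth i xs) (\<rho> (xs ! i # ys) m)))))"
    by (simp add: n_lie_rep_bracket[OF rep xs ys] \<mu>.sum \<mu>.scale)
  also have "\<dots> = (\<Sum>i<n. t ((- 1) ^ (n - Suc i) * eps (ds ! i) (sum_list (drop (Suc i) ds)))
      ((\<mu> \<circ> \<rho> (map \<alpha> (del_nth i xs))) ((\<mu> \<circ> \<rho> (xs ! i # ys)) m)))"
    using xs by (intro sum.cong refl) (simp add: \<mu>\<mu>_\<rho> del_nth_def)
  finally show ?thesis .
qed

lemma hom_rep_twist:
  assumes rep: "n_lie_rep n s G br eps t MG \<rho>" and n2: "2 \<le> n"
    and lin: "Vector_Spaces.linear t t \<mu>" and deg: "deg0 MG MG \<mu>"
    and compat: "\<forall>xs m. length xs = n - 1 \<longrightarrow> \<rho> (map \<alpha> xs) (\<mu> m) = \<mu> (\<rho> xs m)"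
  shows "hom_rep n s G (\<lambda>xs. \<alpha> (br xs)) eps \<alpha> t MG (\<lambda>xs. \<mu> \<circ> \<rho> xs) \<mu>"
proof -
  interpret \<mu>: module_hom t t \<mu>
    using lin by (simp add: module_hom_iff_linear)
  have gvM: "graded_vs t MG"
    and \<rho>_lin: "\<forall>xs. length xs = n - 1 \<longrightarrow> Vector_Spaces.linear t t (\<rho> xs)"
    and \<rho>_multilinear: "\<forall>m. multilinear s t (n - 1) (\<lambda>xs. \<rho> xs m)"
    and \<rho>_deg: "\<forall>xs ds a m. length xs = n - 1 \<and> homog G xs ds \<and> m \<in> MG a \<longrightarrow>
        \<rho> xs m \<in> MG (sum_list ds + a)"
    and \<rho>_skew: "\<forall>xs ds i m. length xs = n - 1 \<and> homog G xs ds \<and> Suc i < n - 1 \<longrightarrow>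
        \<rho> xs m = t (- eps (ds ! i) (ds ! Suc i)) (\<rho> (swap_adj xs i) m)"
    using rep unfolding n_lie_rep_def hom_rep_def by meson+
  have \<mu>\<rho>_lin: "Vector_Spaces.linear t t (\<mu> \<circ> \<rho> xs)" if "length xs = n - 1" for xs
    using \<rho>_lin lin that Vector_Spaces.linear_compose by blast
  have \<mu>\<rho>_multilinear: "multilinear s t (n - 1) (\<lambda>xs. (\<mu> \<circ> \<rho> xs) m)" for m
    using multilinear_compose_linear[OF \<rho>_multilinear[rule_format] lin] by (simp add: o_def)
  have \<mu>\<rho>_deg: "(\<mu> \<circ> \<rho> xs) m \<in> MG (sum_list ds + a)"
    if "length xs = n - 1" "homog G xs ds" "m \<in> MG a" for xs ds a m
    using \<rho>_deg deg that unfolding deg0_def by simp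
  have \<mu>\<rho>_skew: "(\<mu> \<circ> \<rho> xs) m = t (- eps (ds ! i) (ds ! Suc i)) ((\<mu> \<circ> \<rho> (swap_adj xs i)) m)"
    if "length xs = n - 1" "homog G xs ds" "Suc i < n - 1" for xs ds i m
    using \<rho>_skew that \<mu>.scale by (metis comp_apply)
  have \<mu>\<rho>_compat: "(\<mu> \<circ> \<rho> (map \<alpha> xs)) (\<mu> m) = \<mu> ((\<mu> \<circ> \<rho> xs) m)"
    if "length xs = n - 1" for xs m
    using compat that by simp
  show ?thesis
    unfolding hom_rep_def
    by (intro conjI allI impI; (elim conjE)?;
        rule gvM lin deg \<mu>\<rho>_lin \<mu>\<rho>_multilinear \<mu>\<rho>_deg \<mu>\<rho>_skew \<mu>\<rho>_compat
          hom_rep_twist_commutator[OF rep lin compat] hom_rep_twist_bracket[OF rep n2 lin compat];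
        assumption)
qed

theorem proposition3p14:
  fixes s :: "'k::field_char_0 \<Rightarrow> 'v::ab_group_add \<Rightarrow> 'v"
    and G :: "'g::ab_group_add \<Rightarrow> 'v set"
    and t :: "'k \<Rightarrow> 'm::ab_group_add \<Rightarrow> 'm"
    and MG :: "'g \<Rightarrow> 'm set"
    and br :: "'v list \<Rightarrow> 'v" and eps :: "'g \<Rightarrow> 'g \<Rightarrow> 'k"
    and \<rho> :: "'v list \<Rightarrow> 'm \<Rightarrow> 'm" and \<alpha> :: "'v \<Rightarrow> 'v" and \<mu> :: "'m \<Rightarrow> 'm"
  assumes alg: "n_lie_color_alg n s G br eps"
    and rep: "n_lie_rep n s G br eps t MG \<rho>"
    and \<alpha>_lin: "Vector_Spaces.linear s s \<alpha>" and \<alpha>_deg: "deg0 G G \<alpha>"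
    and \<alpha>_hom: "\<forall>xs. length xs = n \<longrightarrow> \<alpha> (br xs) = br (map \<alpha> xs)"
    and \<mu>_lin: "Vector_Spaces.linear t t \<mu>" and \<mu>_deg: "deg0 MG MG \<mu>"
    and compat: "\<forall>xs m. length xs = n - 1 \<longrightarrow> \<rho> (map \<alpha> xs) (\<mu> m) = \<mu> (\<rho> xs m)"
  shows "n_hom_lie_color_alg n s G (\<lambda>xs. \<alpha> (br xs)) eps \<alpha>
       \<and> multiplicative n (\<lambda>xs. \<alpha> (br xs)) \<alpha>
       \<and> hom_rep n s G (\<lambda>xs. \<alpha> (br xs)) eps \<alpha> t MG (\<lambda>xs. \<mu> \<circ> \<rho> xs) \<mu>"
proof -
  have mult: "multiplicative n br \<alpha>"
    using \<alpha>_hom by (simp add: multiplicative_def)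
  have n2: "2 \<le> n"
    using alg by (simp add: n_lie_color_alg_def n_hom_lie_color_alg_def)
  show ?thesis
    using n_hom_lie_color_alg_twist[OF alg \<alpha>_lin \<alpha>_deg mult] multiplicative_twist[OF mult]
      hom_rep_twist[OF rep n2 \<mu>_lin \<mu>_deg compat]
    by blast
qed

end
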